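(* For every $m \in \mathbb{Z}_{>0}$, we have $h_s(m) \geq m(m-1)+1$; for $m\ge 2$ the right-hand side equals $h(1,m-1)$.
   Context: A real matrix is called totally $1$-submodular if every square submatrix (of every size) has determinant of absolute value at most $1$. For $t \in \mathbb{R}^m$ and $A\in\mathbb{R}^{m\times n}$ with columns $A_1,\dots,A_n$, $t+A$ denotes the matrix with columns $t+A_1,\dots,t+A_n$. The shifted Heller constant $h_s(m)$ is the maximum $n$ such that there exist $t \in [0,1)^m\setminus\{\mathbf 0\}$ and $A \in \{-1,0,1\}^{m\times n}$ with pairwise distinct columns such that $t+A$ is totally $1$-submodular. $h(1,k)$ denotes the maximum number of pairwise distinct columns of an integer matrix with $k$ rows whose $k\times k$ minors have maximum absolute value exactly $1$; by Heller's theorem $h(1,k)=k^2+k+1$. *)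

theory Defs
  imports "Jordan_Normal_Form.Determinant" "Jordan_Normal_Form.DL_Submatrix"
begin

definition tot_1_submod :: "real mat \<Rightarrow> bool" where
  "tot_1_submod M \<longleftrightarrow>
     (\<forall>I J. I \<subseteq> {..<dim_row M} \<longrightarrow> J \<subseteq> {..<dim_col M} \<longrightarrow> card I = card J \<longrightarrow>
        \<bar>det (submatrix M I J)\<bar> \<le> 1)"

definition shift_mat :: "real vec \<Rightarrow> int mat \<Rightarrow> real mat" where
  "shift_mat t A = mat (dim_row A) (dim_col A) (\<lambda>(i,j). t $ i + real_of_int (A $$ (i,j)))"

definition hs_admissible :: "nat \<Rightarrow> nat \<Rightarrow> bool" where
  "hs_admissible m n \<longleftrightarrow>
     (\<exists>(t :: real vec) (A :: int mat).
        dim_vec t = m \<and> (\<forall>i<m. 0 \<le> t $ i \<and> t $ i < 1) \<and> t \<noteq> 0\<^sub>v m \<and>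
        A \<in> carrier_mat m n \<and> (\<forall>i<m. \<forall>j<n. A $$ (i,j) \<in> {-1, 0, 1}) \<and>
        distinct (cols A) \<and> tot_1_submod (shift_mat t A))"

definition shifted_heller :: "nat \<Rightarrow> nat" where
  "shifted_heller m = Max {n. hs_admissible m n}"

end

theory Submission
  imports Defs
begin

text \<open>
  Heller's extremal configuration consists of the m(m-1)+1 vectors e_a - e_b (a \<noteq> b in
  {0, ..., m-1}) together with 0, where e_0 is read as 0.  They are columns of the incidence
  matrix of a directed graph with the row of vertex 0 replaced by zeros, so all their minors lie
  in {-1, 0, 1}.  Shift them by t = c e_0 with c = 1/(2 m!).  A square submatrix avoiding the
  first row is unchanged; one meeting it has a row with all entries c and all other entries of
  absolute value at most 1, so by the Leibniz formula its determinant is at most k! c \<le> 1/2 in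
  absolute value.
\<close>

lemma det_eq_0_if_col_sums_0:
  fixes A :: "'a :: idom mat"
  assumes A: "A \<in> carrier_mat n n" and "n > 0"
    and col_sums: "\<And>j. j < n \<Longrightarrow> (\<Sum>i<n. A $$ (i,j)) = 0"
  shows "det A = 0"
proof -
  have "transpose_mat A *\<^sub>v vec n (\<lambda>_. 1) = 0\<^sub>v n"
    using A col_sums by (intro eq_vecI) (auto simp: scalar_prod_def lessThan_atLeast0)
  moreover have "vec n (\<lambda>_. 1) \<noteq> (0\<^sub>v n :: 'a vec)"
    using \<open>n > 0\<close> by (metis index_vec index_zero_vec(1) zero_neq_one)
  ultimately have "det (transpose_mat A) = 0"
    using A det_0_iff_vec_prod_zero[of "transpose_mat A" n] vec_carrier by fastforce
  then show ?thesis
    using A by (simp add: det_transpose)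
qed

lemma abs_det_le_fact_mult:
  fixes A :: "'a :: linordered_idom mat"
  assumes A: "A \<in> carrier_mat n n"
    and entries: "\<And>i j. i < n \<Longrightarrow> j < n \<Longrightarrow> \<bar>A $$ (i,j)\<bar> \<le> 1"
    and "r < n" and row: "\<And>j. j < n \<Longrightarrow> \<bar>A $$ (r,j)\<bar> \<le> c"
  shows "\<bar>det A\<bar> \<le> fact n * c"
proof -
  let ?P = "{p. p permutes {0..<n}}"
  have "\<bar>det A\<bar> \<le> (\<Sum>p\<in>?P. \<bar>signof p * (\<Prod>i = 0..<n. A $$ (i, p i))\<bar>)"
    unfolding det_def'[OF A] by (rule sum_abs)
  also have "\<dots> \<le> (\<Sum>p\<in>?P. c)"
  proof (rule sum_mono)
    fix p assume "p \<in> ?P"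
    then have p_less: "p i < n" if "i < n" for i
      using that by (simp add: permutes_in_image)
    have "\<bar>signof p * (\<Prod>i = 0..<n. A $$ (i, p i))\<bar> = (\<Prod>i = 0..<n. \<bar>A $$ (i, p i)\<bar>)"
      by (simp add: abs_mult abs_prod sign_def)
    also have "\<dots> \<le> (\<Prod>i = 0..<n. if i = r then c else 1)"
      by (rule prod_mono) (use entries row p_less in auto)
    also have "\<dots> = c"
      using \<open>r < n\<close> by simp
    finally show "\<bar>signof p * (\<Prod>i = 0..<n. A $$ (i, p i))\<bar> \<le> c" .
  qed
  also have "\<dots> = fact n * c"
    by (simp add: card_permutations)
  finally show ?thesis .
qed

text \<open>
  Columns of the incidence matrix of a directed graph, where an arc may also have only one of
  its endpoints among the rows.
\<close>
definition incidence_mat :: "'a :: comm_ring_1 mat \<Rightarrow> bool" where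
  "incidence_mat A \<longleftrightarrow>
     (\<forall>i<dim_row A. \<forall>j<dim_col A. A $$ (i,j) \<in> {-1, 0, 1}) \<and>
     (\<forall>j<dim_col A. \<forall>i<dim_row A. \<forall>i'<dim_row A. A $$ (i,j) = 1 \<longrightarrow> A $$ (i',j) = 1 \<longrightarrow> i = i') \<and>
     (\<forall>j<dim_col A. \<forall>i<dim_row A. \<forall>i'<dim_row A. A $$ (i,j) = -1 \<longrightarrow> A $$ (i',j) = -1 \<longrightarrow> i = i')"

lemma incidence_matD:
  assumes "incidence_mat A" "i < dim_row A" "i' < dim_row A" "j < dim_col A"
  shows "A $$ (i,j) \<in> {-1, 0, 1}"
    and "A $$ (i,j) = 1 \<Longrightarrow> A $$ (i',j) = 1 \<Longrightarrow> i = i'"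
    and "A $$ (i,j) = -1 \<Longrightarrow> A $$ (i',j) = -1 \<Longrightarrow> i = i'"
  using assms unfolding incidence_mat_def by blast+

lemma incidence_mat_reindex:
  assumes A: "incidence_mat A"
    and index: "\<And>a b. a < dim_row B \<Longrightarrow> b < dim_col B \<Longrightarrow> B $$ (a,b) = A $$ (f a, g b)"
    and f: "\<And>a. a < dim_row B \<Longrightarrow> f a < dim_row A"
    and g: "\<And>b. b < dim_col B \<Longrightarrow> g b < dim_col A"
    and inj: "inj_on f {..<dim_row B}"
  shows "incidence_mat B"
  unfolding incidence_mat_def
proof (intro conjI allI impI)
  fix a b assume "a < dim_row B" "b < dim_col B"
  then show "B $$ (a,b) \<in> {-1, 0, 1}"
    using incidence_matD(1)[OF A f f g] index by simp
next
  fix b a a' assume ab: "b < dim_col B" "a < dim_row B" "a' < dim_row B"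
    and "B $$ (a,b) = 1" "B $$ (a',b) = 1"
  then have "f a = f a'"
    using incidence_matD(2)[OF A f[OF ab(2)] f[OF ab(3)] g[OF ab(1)]] index by simp
  then show "a = a'"
    using inj ab by (simp add: inj_on_def)
next
  fix b a a' assume ab: "b < dim_col B" "a < dim_row B" "a' < dim_row B"
    and "B $$ (a,b) = -1" "B $$ (a',b) = -1"
  then have "f a = f a'"
    using incidence_matD(3)[OF A f[OF ab(2)] f[OF ab(3)] g[OF ab(1)]] index by simp
  then show "a = a'"
    using inj ab by (simp add: inj_on_def)
qed

lemma incidence_mat_mat_delete:
  assumes "incidence_mat A"
  shows "incidence_mat (mat_delete A i j)"
proof (rule incidence_mat_reindex[OF assms, where f = "insert_index i" and g = "insert_index j"])
  show "inj_on (insert_index i) {..<dim_row (mat_delete A i j)}"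
    by (auto simp: inj_on_def insert_index_def split: if_splits)
qed (auto simp: mat_delete_def insert_index_def)

lemma incidence_mat_submatrix:
  assumes "incidence_mat A"
  shows "incidence_mat (submatrix A I J)"
proof (rule incidence_mat_reindex[OF assms, where f = "pick I" and g = "pick J"])
  fix a b assume "a < dim_row (submatrix A I J)" "b < dim_col (submatrix A I J)"
  then show "submatrix A I J $$ (a, b) = A $$ (pick I a, pick J b)"
    unfolding dim_submatrix by (rule submatrix_index)
next
  fix a assume "a < dim_row (submatrix A I J)"
  then show "pick I a < dim_row A"
    using pick_le by (metis dim_submatrix)
next
  fix b assume "b < dim_col (submatrix A I J)"
  then show "pick J b < dim_col A"
    using pick_le by (metis dim_submatrix)
next
  show "inj_on (pick I) {..<dim_row (submatrix A I J)}"
    unfolding dim_submatrix inj_on_def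
    by (metis lessThan_iff card_pick_le pick_reduce_set)
qed

lemma incidence_mat_of_int:
  assumes "incidence_mat A"
  shows "incidence_mat (map_mat (of_int :: int \<Rightarrow> 'a :: {comm_ring_1, ring_char_0}) A)"
proof -
  have "(of_int x :: 'a) = -1 \<longleftrightarrow> x = -1" for x
    using of_int_eq_iff[of x "-1"] by simp
  then show ?thesis
    using assms unfolding incidence_mat_def by auto
qed

lemma incidence_mat_col_sum_eq_0:
  fixes A :: "'a :: {comm_ring_1, ring_char_0} mat"
  assumes A: "incidence_mat A" and j: "j < dim_col A"
    and i: "i < dim_row A" "i' < dim_row A" "i \<noteq> i'" "A $$ (i,j) \<noteq> 0" "A $$ (i',j) \<noteq> 0"
  shows "(\<Sum>k<dim_row A. A $$ (k,j)) = 0"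
proof -
  obtain p q where pq: "p < dim_row A" "q < dim_row A" "A $$ (p,j) = 1" "A $$ (q,j) = -1"
    using incidence_matD[OF A _ _ j] i by (metis empty_iff insert_iff)
  have zero: "A $$ (k,j) = 0" if "k < dim_row A" "k \<noteq> p" "k \<noteq> q" for k
    using incidence_matD[OF A _ _ j] pq that by (metis empty_iff insert_iff)
  have "p \<noteq> q"
    using pq by auto
  have "(\<Sum>k<dim_row A. A $$ (k,j)) = (\<Sum>k\<in>{p,q}. A $$ (k,j))"
    by (rule sum.mono_neutral_right) (use pq zero in auto)
  also have "\<dots> = 0"
    using pq \<open>p \<noteq> q\<close> by simp
  finally show ?thesis .
qed

lemma det_col_single_nonzero:
  fixes A :: "'a :: comm_ring_1 mat"
  assumes "A \<in> carrier_mat n n" "i0 < n" "j < n"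
    and "\<And>i. i < n \<Longrightarrow> i \<noteq> i0 \<Longrightarrow> A $$ (i,j) = 0"
  shows "det A = A $$ (i0,j) * cofactor A i0 j"
proof -
  have "det A = (\<Sum>i<n. A $$ (i,j) * cofactor A i j)"
    using assms(1,3) by (rule laplace_expansion_column)
  also have "\<dots> = A $$ (i0,j) * cofactor A i0 j"
    using assms(2,4) by (subst sum.remove[of _ i0]) auto
  finally show ?thesis .
qed

lemma det_incidence_mat:
  fixes A :: "'a :: {idom, ring_char_0} mat"
  assumes "A \<in> carrier_mat n n" "incidence_mat A"
  shows "det A \<in> {-1, 0, 1}"
  using assms
proof (induction n arbitrary: A)
  case 0
  then show ?case by simp
next
  case (Suc n)
  note A = \<open>A \<in> carrier_mat (Suc n) (Suc n)\<close> \<open>incidence_mat A\<close>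
  show ?case
  proof (cases "\<exists>j<Suc n. \<exists>i0<Suc n. \<forall>i<Suc n. i \<noteq> i0 \<longrightarrow> A $$ (i,j) = 0")
    case True
    then obtain j i0 where j: "j < Suc n" and i0: "i0 < Suc n"
      and zero: "\<And>i. i < Suc n \<Longrightarrow> i \<noteq> i0 \<Longrightarrow> A $$ (i,j) = 0"
      by blast
    have "det A = A $$ (i0,j) * cofactor A i0 j"
      using A(1) i0 j zero by (rule det_col_single_nonzero)
    also have "\<dots> = A $$ (i0,j) * (-1) ^ (i0 + j) * det (mat_delete A i0 j)"
      by (simp add: cofactor_def)
    also have "\<dots> \<in> {-1, 0, 1}"
    proof -
      have "A $$ (i0,j) \<in> {-1, 0, 1}"
        using incidence_matD(1)[OF A(2)] A(1) i0 j by simp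
      moreover have "(-1 :: 'a) ^ (i0 + j) \<in> {-1, 1}"
        by (cases "even (i0 + j)") auto
      moreover have "det (mat_delete A i0 j) \<in> {-1, 0, 1}"
        using A by (intro Suc.IH incidence_mat_mat_delete) (auto simp: mat_delete_def)
      ultimately show ?thesis
        by auto
    qed
    finally show ?thesis .
  next
    case False
    have "det A = 0"
    proof (rule det_eq_0_if_col_sums_0[OF A(1)])
      fix j assume j: "j < Suc n"
      obtain i where i: "i < Suc n" "i \<noteq> 0" "A $$ (i,j) \<noteq> 0"
        using False j by blast
      obtain i' where i': "i' < Suc n" "i' \<noteq> i" "A $$ (i',j) \<noteq> 0"
        using False j i(1) by blast
      show "(\<Sum>i<Suc n. A $$ (i,j)) = 0"
        using incidence_mat_col_sum_eq_0[OF A(2), of j i i'] A(1) i i' j by simp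
    qed simp
    then show ?thesis by simp
  qed
qed

lemma submatrix_carrier:
  assumes "I \<subseteq> {..<dim_row A}" "J \<subseteq> {..<dim_col A}"
  shows "submatrix A I J \<in> carrier_mat (card I) (card J)"
proof -
  have "{i. i < dim_row A \<and> i \<in> I} = I" "{j. j < dim_col A \<and> j \<in> J} = J"
    using assms by auto
  then show ?thesis
    by (intro carrier_matI) (simp_all only: dim_submatrix)
qed

lemma tot_1_submod_if_incidence_mat:
  assumes "incidence_mat A"
  shows "tot_1_submod A"
  unfolding tot_1_submod_def
proof (intro allI impI)
  fix I J assume "I \<subseteq> {..<dim_row A}" "J \<subseteq> {..<dim_col A}" "card I = card J"
  then have "submatrix A I J \<in> carrier_mat (card I) (card I)"
    using submatrix_carrier by (metis (no_types))
  then have "det (submatrix A I J) \<in> {-1, 0, 1}"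
    using assms by (intro det_incidence_mat incidence_mat_submatrix)
  then show "\<bar>det (submatrix A I J)\<bar> \<le> 1"
    by auto
qed

lemma submatrix_cong:
  assumes "dim_row A = dim_row B" "dim_col A = dim_col B"
    and "\<And>i j. i \<in> I \<Longrightarrow> j \<in> J \<Longrightarrow> i < dim_row A \<Longrightarrow> j < dim_col A \<Longrightarrow> A $$ (i,j) = B $$ (i,j)"
  shows "submatrix A I J = submatrix B I J"
proof (rule eq_matI)
  fix a b assume "a < dim_row (submatrix B I J)" "b < dim_col (submatrix B I J)"
  then have a: "a < card {i. i < dim_row A \<and> i \<in> I}" and b: "b < card {j. j < dim_col A \<and> j \<in> J}"
    using assms(1,2) by (simp_all add: dim_submatrix)
  have "pick I a \<in> I" "pick J b \<in> J"
    using pick_in_set_le[OF a] pick_in_set_le[OF b] pick_reduce_set[OF a] pick_reduce_set[OF b]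
    by simp_all
  moreover have "pick I a < dim_row A" "pick J b < dim_col A"
    using pick_le[OF a] pick_le[OF b] .
  ultimately show "submatrix A I J $$ (a,b) = submatrix B I J $$ (a,b)"
    using submatrix_index[OF a b] submatrix_index[of a B I b J] a b assms by simp
qed (simp_all add: dim_submatrix assms(1,2))

lemma abs_det_submatrix_le_fact_mult:
  fixes M :: "'a :: linordered_idom mat"
  assumes I: "I \<subseteq> {..<dim_row M}" and J: "J \<subseteq> {..<dim_col M}" and "card I = card J" "r \<in> I"
    and entries: "\<And>i j. i < dim_row M \<Longrightarrow> j < dim_col M \<Longrightarrow> \<bar>M $$ (i,j)\<bar> \<le> 1"
    and row: "\<And>j. j < dim_col M \<Longrightarrow> \<bar>M $$ (r,j)\<bar> \<le> c"
  shows "\<bar>det (submatrix M I J)\<bar> \<le> fact (card I) * c"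
proof -
  have dims: "{i. i < dim_row M \<and> i \<in> I} = I" "{j. j < dim_col M \<and> j \<in> J} = J"
    using I J by auto
  have index: "submatrix M I J $$ (a,b) = M $$ (pick I a, pick J b)"
    and pick_less: "pick I a < dim_row M" "pick J b < dim_col M"
    if "a < card I" "b < card I" for a b
    using that submatrix_index[of a M I b J] pick_le[of a "dim_row M" I] pick_le[of b "dim_col M" J] \<open>card I = card J\<close>
    unfolding dims by simp_all
  define a0 where "a0 = card {a \<in> I. a < r}"
  have "finite I"
    using I finite_subset by blast
  then have "a0 < card I"
    unfolding a0_def using \<open>r \<in> I\<close> by (intro psubset_card_mono) auto
  have "pick I a0 = r"
    unfolding a0_def using \<open>r \<in> I\<close> by (rule pick_card_in_set)
  show ?thesis
  proof (rule abs_det_le_fact_mult[OF _ _ \<open>a0 < card I\<close>])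
    show "submatrix M I J \<in> carrier_mat (card I) (card I)"
      using submatrix_carrier[OF I J] \<open>card I = card J\<close> by simp
  next
    fix a b assume "a < card I" "b < card I"
    then show "\<bar>submatrix M I J $$ (a,b)\<bar> \<le> 1"
      using index pick_less entries by simp
  next
    fix b assume "b < card I"
    then show "\<bar>submatrix M I J $$ (a0,b)\<bar> \<le> c"
      using index[OF \<open>a0 < card I\<close>] pick_less[OF \<open>a0 < card I\<close>] row \<open>pick I a0 = r\<close>
      by simp
  qed
qed

lemma tot_1_submod_perturb_row:
  fixes A M :: "real mat"
  assumes A: "tot_1_submod A" "A \<in> carrier_mat m n" and M: "M \<in> carrier_mat m n"
    and off_row: "\<And>i j. i < m \<Longrightarrow> j < n \<Longrightarrow> i \<noteq> r \<Longrightarrow> M $$ (i,j) = A $$ (i,j)"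
    and entries: "\<And>i j. i < m \<Longrightarrow> j < n \<Longrightarrow> \<bar>M $$ (i,j)\<bar> \<le> 1"
    and row: "\<And>j. j < n \<Longrightarrow> \<bar>M $$ (r,j)\<bar> \<le> c" and "0 \<le> c" "fact m * c \<le> 1"
  shows "tot_1_submod M"
  unfolding tot_1_submod_def
proof (intro allI impI)
  fix I J assume I: "I \<subseteq> {..<dim_row M}" and J: "J \<subseteq> {..<dim_col M}" and "card I = card J"
  show "\<bar>det (submatrix M I J)\<bar> \<le> 1"
  proof (cases "r \<in> I")
    case True
    have "card I \<le> m"
      using card_mono[OF _ I] M by simp
    have "\<bar>det (submatrix M I J)\<bar> \<le> fact (card I) * c"
      using abs_det_submatrix_le_fact_mult[OF I J \<open>card I = card J\<close> True] entries row M by simp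
    also have "\<dots> \<le> fact m * c"
      using \<open>card I \<le> m\<close> \<open>0 \<le> c\<close> by (intro mult_right_mono) (auto simp: fact_mono)
    also have "\<dots> \<le> 1"
      by fact
    finally show ?thesis .
  next
    case False
    then have "submatrix M I J = submatrix A I J"
      using A(2) M off_row by (intro submatrix_cong) auto
    then show ?thesis
      using A I J \<open>card I = card J\<close> M unfolding tot_1_submod_def by simp
  qed
qed

lemma tot_1_submod_shift_unit_vec:
  fixes A :: "int mat"
  assumes inc: "incidence_mat A" and A: "A \<in> carrier_mat m n"
    and "r < m" and row_r: "\<And>j. j < n \<Longrightarrow> A $$ (r,j) = 0"
    and "0 \<le> c" and small: "fact m * c \<le> 1"
  shows "tot_1_submod (shift_mat (c \<cdot>\<^sub>v unit_vec m r) A)"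
proof (rule tot_1_submod_perturb_row[of "map_mat real_of_int A" m n _ r c])
  show "0 \<le> c"
    by fact
  have "c \<le> fact m * c"
    using mult_right_mono[OF fact_ge_1 \<open>0 \<le> c\<close>] by simp
  then have "c \<le> 1"
    using small by linarith
  show "tot_1_submod (map_mat real_of_int A)"
    using inc by (intro tot_1_submod_if_incidence_mat incidence_mat_of_int)
  show "map_mat real_of_int A \<in> carrier_mat m n" "shift_mat (c \<cdot>\<^sub>v unit_vec m r) A \<in> carrier_mat m n"
    using A by (auto simp: shift_mat_def)
  show "fact m * c \<le> 1"
    by (fact small)
  fix i j assume ij: "i < m" "j < n"
  have entry: "shift_mat (c \<cdot>\<^sub>v unit_vec m r) A $$ (i,j) = (if i = r then c else 0) + A $$ (i,j)"
    using A ij \<open>r < m\<close> by (simp add: shift_mat_def)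
  show "i \<noteq> r \<Longrightarrow> shift_mat (c \<cdot>\<^sub>v unit_vec m r) A $$ (i,j) = map_mat real_of_int A $$ (i,j)"
    using entry A ij by simp
  have "real_of_int (A $$ (i,j)) \<in> {-1, 0, 1}"
    using incidence_matD(1)[OF inc, of i i j] A ij by auto
  then show "\<bar>shift_mat (c \<cdot>\<^sub>v unit_vec m r) A $$ (i,j)\<bar> \<le> 1"
    using entry row_r[OF \<open>j < n\<close>] \<open>0 \<le> c\<close> \<open>c \<le> 1\<close> by auto
next
  fix j assume "j < n"
  then show "\<bar>shift_mat (c \<cdot>\<^sub>v unit_vec m r) A $$ (r,j)\<bar> \<le> c"
    using A \<open>r < m\<close> row_r \<open>0 \<le> c\<close> by (simp add: shift_mat_def)
qed

definition arc_vec :: "nat \<Rightarrow> nat \<Rightarrow> nat \<Rightarrow> int vec" where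
  "arc_vec m a b = vec m (\<lambda>i. of_bool (i \<noteq> 0 \<and> i = a) - of_bool (i \<noteq> 0 \<and> i = b))"

lemma arc_vec_eq_1_iff: "i < m \<Longrightarrow> arc_vec m a b $ i = 1 \<longleftrightarrow> i \<noteq> 0 \<and> i = a \<and> a \<noteq> b"
  by (auto simp: arc_vec_def)

lemma arc_vec_eq_minus_1_iff: "i < m \<Longrightarrow> arc_vec m a b $ i = -1 \<longleftrightarrow> i \<noteq> 0 \<and> i = b \<and> a \<noteq> b"
  by (auto simp: arc_vec_def)

lemma arc_vec_entries: "i < m \<Longrightarrow> arc_vec m a b $ i \<in> {-1, 0, 1}"
  by (auto simp: arc_vec_def)

lemma arc_vec_index_0: "0 < m \<Longrightarrow> arc_vec m a b $ 0 = 0"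
  by (simp add: arc_vec_def)

lemma arc_vec_diag: "arc_vec m a a = 0\<^sub>v m"
  by (auto simp: arc_vec_def)

lemma arc_vec_inj:
  assumes eq: "arc_vec m a b = arc_vec m a' b'"
    and "a < m" "b < m" "a' < m" "b' < m" "a \<noteq> b" "a' \<noteq> b'"
  shows "a = a'" "b = b'"
proof -
  have plus: "x \<noteq> 0 \<and> x = a \<longleftrightarrow> x \<noteq> 0 \<and> x = a'" if "x < m" for x
    using arc_vec_eq_1_iff[OF that, of a b] arc_vec_eq_1_iff[OF that, of a' b'] eq assms by auto
  show "a = a'"
    using plus[of a] plus[of a'] assms by auto
  have minus: "x \<noteq> 0 \<and> x = b \<longleftrightarrow> x \<noteq> 0 \<and> x = b'" if "x < m" for x
    using arc_vec_eq_minus_1_iff[OF that, of a b] arc_vec_eq_minus_1_iff[OF that, of a' b'] eq assms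
    by auto
  show "b = b'"
    using minus[of b] minus[of b'] assms by auto
qed

lemma arc_vec_neq_0:
  assumes "a < m" "b < m" "a \<noteq> b"
  shows "arc_vec m a b \<noteq> 0\<^sub>v m"
proof
  assume "arc_vec m a b = 0\<^sub>v m"
  then have "arc_vec m a b $ a = 0" "arc_vec m a b $ b = 0"
    using assms by simp_all
  then show False
    using arc_vec_eq_1_iff[of a m a b] arc_vec_eq_minus_1_iff[of b m a b] assms by auto
qed

definition heller_cols :: "nat \<Rightarrow> int vec set" where
  "heller_cols m = (\<lambda>(a,b). arc_vec m a b) ` ({..<m} \<times> {..<m})"

lemma card_heller_cols:
  assumes "0 < m"
  shows "card (heller_cols m) = m * (m - 1) + 1"
proof -
  define D where "D = {..<m} \<times> {..<m} - (\<lambda>a. (a,a)) ` {..<m}"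
  have "heller_cols m = insert (0\<^sub>v m) ((\<lambda>(a,b). arc_vec m a b) ` D)"
    using assms unfolding heller_cols_def D_def by (force simp: arc_vec_diag)
  moreover have "inj_on (\<lambda>(a,b). arc_vec m a b) D"
    unfolding inj_on_def D_def by (auto dest: arc_vec_inj)
  moreover have "0\<^sub>v m \<notin> (\<lambda>(a,b). arc_vec m a b) ` D"
    unfolding D_def using arc_vec_neq_0 by fastforce
  moreover have "card D = m * m - m"
    unfolding D_def by (subst card_Diff_subset) (auto simp: card_image inj_on_def card_cartesian_product)
  ultimately show ?thesis
    by (simp add: card_image D_def diff_mult_distrib2)
qed

lemma nth_heller_colsE:
  assumes "set cs \<subseteq> heller_cols m" "j < length cs"
  obtains a b where "cs ! j = arc_vec m a b"
proof -
  have "cs ! j \<in> heller_cols m"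
    using assms nth_mem by blast
  then show ?thesis
    using that unfolding heller_cols_def by auto
qed

lemma heller_cols_carrier: "heller_cols m \<subseteq> carrier_vec m"
  unfolding heller_cols_def arc_vec_def by auto

lemma incidence_mat_heller_cols:
  assumes "set cs \<subseteq> heller_cols m"
  shows "incidence_mat (mat_of_cols m cs)"
  unfolding incidence_mat_def
proof (intro conjI allI impI)
  fix i j assume "i < dim_row (mat_of_cols m cs)" "j < dim_col (mat_of_cols m cs)"
  moreover obtain a b where "cs ! j = arc_vec m a b"
    using nth_heller_colsE[OF assms] \<open>j < dim_col (mat_of_cols m cs)\<close> by auto
  ultimately show "mat_of_cols m cs $$ (i,j) \<in> {-1, 0, 1}"
    using arc_vec_entries by (simp add: mat_of_cols_index)
next
  fix j i i' assume "j < dim_col (mat_of_cols m cs)" "i < dim_row (mat_of_cols m cs)"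
    "i' < dim_row (mat_of_cols m cs)" "mat_of_cols m cs $$ (i,j) = 1" "mat_of_cols m cs $$ (i',j) = 1"
  moreover obtain a b where "cs ! j = arc_vec m a b"
    using nth_heller_colsE[OF assms] \<open>j < dim_col (mat_of_cols m cs)\<close> by auto
  ultimately show "i = i'"
    using arc_vec_eq_1_iff by (simp add: mat_of_cols_index)
next
  fix j i i' assume "j < dim_col (mat_of_cols m cs)" "i < dim_row (mat_of_cols m cs)"
    "i' < dim_row (mat_of_cols m cs)" "mat_of_cols m cs $$ (i,j) = -1" "mat_of_cols m cs $$ (i',j) = -1"
  moreover obtain a b where "cs ! j = arc_vec m a b"
    using nth_heller_colsE[OF assms] \<open>j < dim_col (mat_of_cols m cs)\<close> by auto
  ultimately show "i = i'"
    using arc_vec_eq_minus_1_iff by (simp add: mat_of_cols_index)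
qed

lemma hs_admissible_heller_cols:
  assumes "0 < m"
  shows "hs_admissible m (card (heller_cols m))"
proof -
  obtain cs where cs: "distinct cs" "set cs = heller_cols m"
    using finite_distinct_list[of "heller_cols m"] unfolding heller_cols_def by blast
  define A where "A = mat_of_cols m cs"
  have length_cs: "length cs = card (heller_cols m)"
    using distinct_card[OF cs(1)] cs(2) by simp
  have A: "A \<in> carrier_mat m (card (heller_cols m))"
    unfolding A_def length_cs[symmetric] by simp
  have col: "\<exists>a b. A $$ (i,j) = arc_vec m a b $ i" if "i < m" "j < card (heller_cols m)" for i j
    using that nth_heller_colsE[of cs m j] cs(2) unfolding A_def length_cs[symmetric]
    by (metis mat_of_cols_index order_refl)
  define c :: real where "c = 1 / (2 * fact m)"
  have "0 < c" "c < 1" "fact m * c \<le> 1"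
    unfolding c_def using fact_ge_1[of m, where 'a = real] by (simp_all add: field_simps, linarith)
  show ?thesis
    unfolding hs_admissible_def
  proof (intro exI conjI)
    show "dim_vec (c \<cdot>\<^sub>v unit_vec m 0) = m"
      by simp
    show "\<forall>i<m. 0 \<le> (c \<cdot>\<^sub>v unit_vec m 0) $ i \<and> (c \<cdot>\<^sub>v unit_vec m 0) $ i < 1"
      using \<open>0 < c\<close> \<open>c < 1\<close> assms by simp
    show "c \<cdot>\<^sub>v unit_vec m 0 \<noteq> 0\<^sub>v m"
      using \<open>0 < c\<close> assms by (auto dest!: arg_cong[where f = "\<lambda>v. v $ 0"])
    show "A \<in> carrier_mat m (card (heller_cols m))"
      by (fact A)
    show "\<forall>i<m. \<forall>j<card (heller_cols m). A $$ (i,j) \<in> {-1, 0, 1}"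
      using col arc_vec_entries by fastforce
    show "distinct (cols A)"
      unfolding A_def using cs heller_cols_carrier by simp
    show "tot_1_submod (shift_mat (c \<cdot>\<^sub>v unit_vec m 0) A)"
    proof (rule tot_1_submod_shift_unit_vec[OF _ A assms])
      show "incidence_mat A"
        unfolding A_def using cs(2) by (intro incidence_mat_heller_cols) simp
      show "A $$ (0,j) = 0" if "j < card (heller_cols m)" for j
        using col[OF assms that] arc_vec_index_0[OF assms] by auto
    qed (use \<open>0 < c\<close> \<open>fact m * c \<le> 1\<close> in auto)
  qed
qed

lemma finite_vecs_over:
  assumes "finite S"
  shows "finite {v \<in> carrier_vec n. set\<^sub>v v \<subseteq> S}"
proof (rule finite_subset)
  show "{v \<in> carrier_vec n. set\<^sub>v v \<subseteq> S} \<subseteq> vec_of_list ` {xs. set xs \<subseteq> S \<and> length xs = n}"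
  proof
    fix v assume "v \<in> {v \<in> carrier_vec n. set\<^sub>v v \<subseteq> S}"
    then show "v \<in> vec_of_list ` {xs. set xs \<subseteq> S \<and> length xs = n}"
      by (intro image_eqI[where x = "list_of_vec v"]) (auto simp: vec_list set_list_of_vec)
  qed
  show "finite (vec_of_list ` {xs. set xs \<subseteq> S \<and> length xs = n})"
    using assms by (intro finite_imageI finite_lists_length_eq)
qed

lemma hs_admissible_le_card_sign_vecs:
  assumes "hs_admissible m n"
  shows "n \<le> card {v :: int vec \<in> carrier_vec m. set\<^sub>v v \<subseteq> {-1, 0, 1}}"
proof -
  obtain A :: "int mat" where A: "A \<in> carrier_mat m n" "distinct (cols A)"
    and entries: "\<forall>i<m. \<forall>j<n. A $$ (i,j) \<in> {-1, 0, 1}"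
    using assms unfolding hs_admissible_def by blast
  have "set (cols A) \<subseteq> {v \<in> carrier_vec m. set\<^sub>v v \<subseteq> {-1, 0, 1}}"
  proof
    fix v assume "v \<in> set (cols A)"
    then obtain j where "j < n" "v = col A j"
      using A(1) by (auto simp: cols_def)
    moreover have "set\<^sub>v v \<subseteq> {-1, 0, 1}"
    proof
      fix x assume "x \<in> set\<^sub>v v"
      then obtain i where "i < m" "x = A $$ (i,j)"
        using A(1) \<open>v = col A j\<close> \<open>j < n\<close> by (auto elim!: vec_setE)
      then show "x \<in> {-1, 0, 1}"
        using entries \<open>j < n\<close> by blast
    qed
    ultimately show "v \<in> {v \<in> carrier_vec m. set\<^sub>v v \<subseteq> {-1, 0, 1}}"
      using A(1) by simp
  qed
  then have "card (set (cols A)) \<le> card {v :: int vec \<in> carrier_vec m. set\<^sub>v v \<subseteq> {-1, 0, 1}}"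
    by (intro card_mono finite_vecs_over) auto
  then show ?thesis
    using distinct_card[OF A(2)] A(1) by simp
qed

lemma finite_hs_admissible: "finite {n. hs_admissible m n}"
  using hs_admissible_le_card_sign_vecs by (intro finite_subset[OF _ finite_atMost]) auto

theorem proposition2p6:
  fixes m :: nat
  assumes "m > 0"
  shows "shifted_heller m \<ge> m * (m - 1) + 1
         \<and> (m \<ge> 2 \<longrightarrow> m * (m - 1) + 1 = (m - 1)^2 + (m - 1) + 1)"
proof
  have "hs_admissible m (m * (m - 1) + 1)"
    using hs_admissible_heller_cols[OF assms] card_heller_cols[OF assms] by simp
  then show "shifted_heller m \<ge> m * (m - 1) + 1"
    unfolding shifted_heller_def using finite_hs_admissible by (intro Max_ge) auto
  show "m \<ge> 2 \<longrightarrow> m * (m - 1) + 1 = (m - 1)^2 + (m - 1) + 1"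
    by (cases m) (simp_all add: power2_eq_square)
qed

end
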